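(* Let $(X,\rho)$ be a compact metric space of diameter $d$ and let $\mu$ be a nondegenerate Borel probability measure on $X$. Then for every $\varepsilon>0$, $$H_{\rho,(d+1)\varepsilon}(\mu)\le H'_{\rho,\varepsilon}(\mu).$$
   Context: For a Borel probability measure $\mu$ on a metric space $(X,\rho)$: $H_{\rho,\varepsilon}(\mu)=\inf\{H(\nu): k_\rho(\nu,\mu)<\varepsilon\}$, where $\nu$ ranges over discrete probability measures $\nu=\sum_i c_i\delta_{x_i}$ with finite entropy $H(\nu)=-\sum_i c_i\ln c_i$, and $k_\rho$ is the Kantorovich (Monge–Kantorovich transportation, Wasserstein-1) metric on Borel probability measures on $(X,\rho)$. Also $H'_{\rho,\varepsilon}(\mu)=\min\{\ln k: \exists X'\subset X,\ \mu(X')>1-\varepsilon,\ \exists x_1,\dots,x_k \text{ with } X'\subset\bigcup_{i=1}^kV_\varepsilon(x_i)\}$, where $V_\varepsilon(x)$ is the $\rho$-ball of radius $\varepsilon$ centered at $x$. Nondegenerate means every nonempty open set has positive measure. *)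

theory Defs
  imports "HOL-Probability.Probability"
begin

text \<open>A discrete probability measure \<nu> = sum c_i delta_{x_i} is represented by a pmf p;
  its Borel version is the pushforward of measure_pmf p onto the Borel sigma-algebra.\<close>
definition pmf_to_borel :: "'a::metric_space pmf \<Rightarrow> 'a measure" where
  "pmf_to_borel p = distr (measure_pmf p) borel (\<lambda>x. x)"

definition pmf_entropy_finite :: "'a pmf \<Rightarrow> bool" where
  "pmf_entropy_finite p \<longleftrightarrow> (\<lambda>x. - pmf p x * ln (pmf p x)) summable_on set_pmf p"

definition pmf_entropy :: "'a pmf \<Rightarrow> real" where
  "pmf_entropy p = infsum (\<lambda>x. - pmf p x * ln (pmf p x)) (set_pmf p)"

definition couplings :: "'a::metric_space measure \<Rightarrow> 'a measure \<Rightarrow> ('a \<times> 'a) measure set" where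
  "couplings \<nu> \<mu> = {\<gamma>. sets \<gamma> = sets borel \<and> distr \<gamma> borel fst = \<nu> \<and> distr \<gamma> borel snd = \<mu>}"

definition kantorovich :: "'a::metric_space measure \<Rightarrow> 'a measure \<Rightarrow> ennreal" where
  "kantorovich \<nu> \<mu> = (INF \<gamma> \<in> couplings \<nu> \<mu>. \<integral>\<^sup>+ z. ennreal (dist (fst z) (snd z)) \<partial>\<gamma>)"

definition H_eps :: "'a::metric_space measure \<Rightarrow> real \<Rightarrow> ereal" where
  "H_eps \<mu> \<epsilon> = (INF p \<in> {p. pmf_entropy_finite p \<and> kantorovich (pmf_to_borel p) \<mu> < ennreal \<epsilon>}.
                    ereal (pmf_entropy p))"

definition H'_eps :: "'a::metric_space measure \<Rightarrow> real \<Rightarrow> ereal" where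
  "H'_eps \<mu> \<epsilon> = (INF k \<in> {k::nat. k \<ge> 1 \<and> (\<exists>X' \<in> sets \<mu>. measure \<mu> X' > 1 - \<epsilon> \<and>
                    (\<exists>x :: nat \<Rightarrow> 'a. X' \<subseteq> (\<Union>i<k. ball (x i) \<epsilon>)))}. ereal (ln (real k)))"

definition nondegenerate :: "'a::topological_space measure \<Rightarrow> bool" where
  "nondegenerate \<mu> \<longleftrightarrow> (\<forall>U. open U \<and> U \<noteq> {} \<longrightarrow> emeasure \<mu> U > 0)"

end

theory Submission
  imports Defs
begin

text \<open>Given k centres whose \<open>\<epsilon>\<close>-balls cover a set X' of measure \<open>> 1 - \<epsilon>\<close>, send each point
  of X' to the first centre whose ball contains it and every other point to the first centre.
  The image of \<open>\<mu>\<close> is a discrete measure on at most k points, so its entropy is at most \<open>ln k\<close>,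
  and the graph of the map is a coupling with \<open>\<mu>\<close> whose cost is below \<open>\<epsilon>\<close> on X' and at most the
  diameter d on a set of measure \<open>< \<epsilon>\<close>, hence below \<open>(d + 1) \<epsilon>\<close>.\<close>

lemma pmf_entropy_finite_if_finite_support:
  "finite (set_pmf p) \<Longrightarrow> pmf_entropy_finite p"
  unfolding pmf_entropy_finite_def by simp

lemma pmf_entropy_le_ln_card:
  assumes fin: "finite (set_pmf p)" and card: "card (set_pmf p) \<le> k"
  shows "pmf_entropy p \<le> ln (real k)"
proof -
  let ?S = "set_pmf p"
  have total: "(\<Sum>y\<in>?S. pmf p y) = 1" using sum_pmf_eq_1[OF fin] by simp
  have pos: "pmf p y > 0" if "y \<in> ?S" for y using that by (simp add: set_pmf_eq')
  have "k > 0" using card fin set_pmf_not_empty[of p] by (metis card_gt_0_iff gr0I le_zero_eq)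
  then have k: "real k > 0" by simp
  (* Gibbs inequality against the uniform distribution on k points, via ln t <= t - 1. *)
  have pointwise: "pmf p y * ln (1 / (real k * pmf p y)) = - pmf p y * ln (pmf p y) - ln (real k) * pmf p y"
    if "y \<in> ?S" for y
    using k pos[OF that] by (simp add: ln_div ln_mult algebra_simps)
  have "(\<Sum>y\<in>?S. - pmf p y * ln (pmf p y)) - ln (real k)
        = (\<Sum>y\<in>?S. pmf p y * ln (1 / (real k * pmf p y)))"
    by (simp add: pointwise total sum_subtractf flip: sum_distrib_left cong: sum.cong)
  also have "\<dots> \<le> (\<Sum>y\<in>?S. pmf p y * (1 / (real k * pmf p y) - 1))"
    using pos k by (intro sum_mono mult_left_mono ln_le_minus_one) auto
  also have "\<dots> = (\<Sum>y\<in>?S. 1 / real k - pmf p y)"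
    using k by (intro sum.cong) (auto simp: field_simps set_pmf_iff)
  also have "\<dots> = real (card ?S) / real k - 1"
    by (simp add: total sum_subtractf)
  also have "\<dots> \<le> 0" using card k by (simp add: divide_le_eq_1)
  finally show ?thesis using fin by (simp add: pmf_entropy_def)
qed

lemma finite_range_distr_pmf:
  fixes f :: "'b \<Rightarrow> 'a::metric_space"
  assumes "prob_space M" and f: "f \<in> measurable M (count_space UNIV)"
    and range: "f ` space M \<subseteq> S" and "finite S"
  obtains p where "pmf_to_borel p = distr M borel f" and "set_pmf p \<subseteq> S"
proof
  interpret prob_space M by fact
  let ?N = "distr M (count_space UNIV) f"
  interpret N: prob_space ?N by (rule prob_space_distr[OF f])
  have "AE y in ?N. y \<in> S" using range by (subst AE_distr_iff[OF f]) auto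
  then have "AE y in ?N. measure ?N {y} \<noteq> 0"
    using N.AE_support_countable \<open>finite S\<close> countable_finite by auto
  moreover define p where "p = Abs_pmf ?N"
  ultimately have p: "measure_pmf p = ?N"
    using N.prob_space_axioms by (auto intro: Abs_pmf_inverse)
  show "pmf_to_borel p = distr M borel f"
    unfolding pmf_to_borel_def p by (subst distr_distr) (auto simp: measurable_count_space f comp_def)
  show "set_pmf p \<subseteq> S"
    using \<open>AE y in ?N. y \<in> S\<close> unfolding p[symmetric] AE_measure_pmf_iff by blast
qed

lemma nearest_centre_map:
  fixes x :: "nat \<Rightarrow> 'a::metric_space"
  assumes "A \<in> sets borel" and cover: "A \<subseteq> (\<Union>i<k. ball (x i) \<epsilon>)" and "k \<ge> 1"
  obtains f where "f \<in> measurable borel (count_space UNIV)"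
    and "\<And>z. f z \<in> x ` {..<k}" and "\<And>z. z \<in> A \<Longrightarrow> dist (f z) z < \<epsilon>"
proof
  define g where "g z = (if z \<in> A then LEAST i. z \<in> ball (x i) \<epsilon> else 0)" for z
  have g_least: "g z \<le> i \<and> z \<in> ball (x (g z)) \<epsilon>" if "z \<in> A" "z \<in> ball (x i) \<epsilon>" for z i
    using that by (auto simp: g_def intro: Least_le LeastI)
  have g_bound: "g z < k" for z
  proof (cases "z \<in> A")
    case True
    with cover obtain i where "i < k" "z \<in> ball (x i) \<epsilon>" by blast
    with g_least[OF True] show ?thesis by (meson le_less_trans)
  qed (use \<open>k \<ge> 1\<close> in \<open>simp add: g_def\<close>)
  have "(\<lambda>z. LEAST i. z \<in> ball (x i) \<epsilon>) \<in> measurable borel (count_space UNIV)"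
    by (intro measurable_Least) (simp add: pred_def flip: ball_def)
  then have "g \<in> measurable borel (count_space UNIV)"
    unfolding g_def using \<open>A \<in> sets borel\<close> by (intro measurable_If_set) auto
  then show "x \<circ> g \<in> measurable borel (count_space UNIV)"
    by (rule measurable_comp) simp
  show "(x \<circ> g) z \<in> x ` {..<k}" for z
    using g_bound by simp
  show "dist ((x \<circ> g) z) z < \<epsilon>" if "z \<in> A" for z
    using cover g_least[OF that] that by auto
qed

lemma borel_measurable_graph_finite_range:
  fixes f :: "'a::topological_space \<Rightarrow> 'b::topological_space"
  assumes f: "f \<in> measurable borel (count_space UNIV)" and "finite (range f)"
  shows "(\<lambda>z. (f z, z)) \<in> borel_measurable borel"
proof (rule borel_measurableI)
  fix U :: "('b \<times> 'a) set" assume "open U"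
  then have "open (Pair y -` U)" for y by (intro open_vimage continuous_intros)
  moreover have "f -` {y} \<in> sets borel" for y using measurable_sets[OF f] by simp
  ultimately have "(\<Union>y\<in>range f. f -` {y} \<inter> Pair y -` U) \<in> sets borel"
    using \<open>finite (range f)\<close> by (intro sets.finite_UN) auto
  moreover have "(\<lambda>z. (f z, z)) -` U \<inter> space borel = (\<Union>y\<in>range f. f -` {y} \<inter> Pair y -` U)"
    by auto
  ultimately show "(\<lambda>z. (f z, z)) -` U \<inter> space borel \<in> sets borel"
    by simp
qed

lemma kantorovich_distr_le:
  fixes \<mu> :: "'a::metric_space measure"
  assumes sets: "sets \<mu> = sets borel" and graph: "(\<lambda>z. (f z, z)) \<in> borel_measurable \<mu>"
  shows "kantorovich (distr \<mu> borel f) \<mu> \<le> (\<integral>\<^sup>+ z. ennreal (dist (f z) z) \<partial>\<mu>)"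
proof -
  let ?\<gamma> = "distr \<mu> borel (\<lambda>z. (f z, z))"
  have [measurable]: "fst \<in> borel_measurable borel" "snd \<in> borel_measurable borel"
    "(\<lambda>z. dist (fst z) (snd z)) \<in> borel_measurable borel"
    for z :: "'a \<times> 'a"
    by (intro borel_measurable_continuous_onI continuous_intros)+
  have "distr ?\<gamma> borel fst = distr \<mu> borel f"
    by (subst distr_distr[OF _ graph]) (simp_all add: comp_def)
  moreover have "distr ?\<gamma> borel snd = distr \<mu> borel (\<lambda>z. z)"
    by (subst distr_distr[OF _ graph]) (simp_all add: comp_def)
  moreover have "distr \<mu> borel (\<lambda>z. z) = \<mu>" by (rule distr_id2) (simp add: sets)
  ultimately have "?\<gamma> \<in> couplings (distr \<mu> borel f) \<mu>"
    unfolding couplings_def by simp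
  then have "kantorovich (distr \<mu> borel f) \<mu> \<le> (\<integral>\<^sup>+ z. ennreal (dist (fst z) (snd z)) \<partial>?\<gamma>)"
    unfolding kantorovich_def by (rule INF_lower)
  also have "\<dots> = (\<integral>\<^sup>+ z. ennreal (dist (f z) z) \<partial>\<mu>)"
    by (subst nn_integral_distr[OF graph]) simp_all
  finally show ?thesis .
qed

lemma nn_integral_lt_if_small_on_large_set:
  fixes c :: "'b \<Rightarrow> real"
  assumes "prob_space M" and A: "A \<in> sets M" and large: "measure M A > 1 - \<epsilon>" and "\<epsilon> > 0"
    and bounds: "\<And>z. z \<in> space M \<Longrightarrow> 0 \<le> c z \<and> c z \<le> d"
    and small: "\<And>z. z \<in> A \<Longrightarrow> c z \<le> \<epsilon>"
  shows "(\<integral>\<^sup>+ z. ennreal (c z) \<partial>M) < ennreal ((d + 1) * \<epsilon>)"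
proof -
  interpret prob_space M by fact
  have "d \<ge> 0" using bounds not_empty by fastforce
  show ?thesis
  proof (cases "d = 0")
    case True
    then have "(\<integral>\<^sup>+ z. ennreal (c z) \<partial>M) = 0"
      using bounds by (subst nn_integral_cong[where v = "\<lambda>_. 0"]) (auto intro: antisym)
    then show ?thesis using True \<open>\<epsilon> > 0\<close> by simp
  next
    case False
    let ?b = "\<lambda>z. \<epsilon> * indicator A z + d * indicator (space M - A) z :: real"
    have int: "integrable M (\<lambda>z. \<epsilon> * indicator A z :: real)"
      "integrable M (\<lambda>z. d * indicator (space M - A) z :: real)"
      using A by (auto simp: emeasure_eq_measure)
    have "(\<integral>\<^sup>+ z. ennreal (c z) \<partial>M) \<le> (\<integral>\<^sup>+ z. ennreal (?b z) \<partial>M)"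
      using bounds small by (intro nn_integral_mono ennreal_leI) (auto split: split_indicator)
    also have "\<dots> = ennreal (\<epsilon> * measure M A + d * (1 - measure M A))"
      using int A \<open>\<epsilon> > 0\<close> \<open>d \<ge> 0\<close>
      by (subst nn_integral_eq_integral) (auto simp: prob_compl)
    also have "\<dots> < ennreal ((d + 1) * \<epsilon>)"
    proof (rule ennreal_lessI)
      have "\<epsilon> * measure M A \<le> \<epsilon>" using \<open>\<epsilon> > 0\<close> by (simp add: mult_left_le)
      moreover have "d * (1 - measure M A) < d * \<epsilon>" using False \<open>d \<ge> 0\<close> large by simp
      ultimately show "\<epsilon> * measure M A + d * (1 - measure M A) < (d + 1) * \<epsilon>"
        by (simp add: algebra_simps)
    qed (use \<open>d \<ge> 0\<close> \<open>\<epsilon> > 0\<close> in simp)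
    finally show ?thesis .
  qed
qed


lemma pmf_close_to_ball_cover:
  fixes \<mu> :: "'a::metric_space measure" and x :: "nat \<Rightarrow> 'a"
  assumes "prob_space \<mu>" and sets: "sets \<mu> = sets borel" and "bounded (UNIV :: 'a set)"
    and "\<epsilon> > 0" and "k \<ge> 1" and "X' \<in> sets \<mu>" and "measure \<mu> X' > 1 - \<epsilon>"
    and "X' \<subseteq> (\<Union>i<k. ball (x i) \<epsilon>)"
  obtains p where "set_pmf p \<subseteq> x ` {..<k}"
    and "kantorovich (pmf_to_borel p) \<mu> < ennreal ((diameter (UNIV :: 'a set) + 1) * \<epsilon>)"
proof -
  have meas: "measurable \<mu> = measurable borel"
    using sets by (auto intro: measurable_cong_sets)
  obtain f where f: "f \<in> measurable borel (count_space UNIV)" and range: "\<And>z. f z \<in> x ` {..<k}"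
    and close: "\<And>z. z \<in> X' \<Longrightarrow> dist (f z) z < \<epsilon>"
    using nearest_centre_map \<open>X' \<in> sets \<mu>\<close> \<open>X' \<subseteq> _\<close> \<open>k \<ge> 1\<close> sets by metis
  have "f \<in> measurable \<mu> (count_space UNIV)" unfolding meas by (rule f)
  then obtain p where p: "pmf_to_borel p = distr \<mu> borel f" and support: "set_pmf p \<subseteq> x ` {..<k}"
    by (rule finite_range_distr_pmf[OF assms(1) _ _ finite_imageI[OF finite_lessThan]]) (use range in auto)
  have "range f \<subseteq> x ` {..<k}" using range by blast
  then have "finite (range f)" by (rule finite_subset) simp
  then have graph: "(\<lambda>z. (f z, z)) \<in> borel_measurable \<mu>"
    unfolding meas by (rule borel_measurable_graph_finite_range[OF f])
  have bounds: "0 \<le> dist (f z) z \<and> dist (f z) z \<le> diameter (UNIV :: 'a set)" for z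
    using diameter_bounded_bound \<open>bounded UNIV\<close> by auto
  have "kantorovich (pmf_to_borel p) \<mu> \<le> (\<integral>\<^sup>+ z. ennreal (dist (f z) z) \<partial>\<mu>)"
    unfolding p by (rule kantorovich_distr_le[OF sets graph])
  also have "\<dots> < ennreal ((diameter (UNIV :: 'a set) + 1) * \<epsilon>)"
    by (rule nn_integral_lt_if_small_on_large_set[OF assms(1,6,7,4)])
      (use bounds close less_imp_le in auto)
  finally show thesis using that support by blast
qed

theorem lemma3:
  fixes \<mu> :: "'a::metric_space measure" and \<epsilon> :: real
  assumes "compact (UNIV :: 'a set)"
    and "prob_space \<mu>" and "sets \<mu> = sets borel"
    and "nondegenerate \<mu>"
    and "\<epsilon> > 0"
  shows "H_eps \<mu> ((diameter (UNIV :: 'a set) + 1) * \<epsilon>) \<le> H'_eps \<mu> \<epsilon>"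
  unfolding H'_eps_def
proof (rule INF_greatest, clarify)
  fix k X' and x :: "nat \<Rightarrow> 'a"
  assume cover: "k \<ge> 1" "X' \<in> sets \<mu>" "measure \<mu> X' > 1 - \<epsilon>" "X' \<subseteq> (\<Union>i<k. ball (x i) \<epsilon>)"
  obtain p where support: "set_pmf p \<subseteq> x ` {..<k}"
    and close: "kantorovich (pmf_to_borel p) \<mu> < ennreal ((diameter (UNIV :: 'a set) + 1) * \<epsilon>)"
    using pmf_close_to_ball_cover[OF assms(2,3) compact_imp_bounded[OF assms(1)] assms(5) cover] .
  have "finite (set_pmf p)" using support finite_subset by blast
  moreover have "card (set_pmf p) \<le> k"
    using card_mono[OF _ support] card_image_le[of "{..<k}" x] by simp
  ultimately have entropy: "pmf_entropy_finite p" "pmf_entropy p \<le> ln (real k)"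
    by (auto intro: pmf_entropy_finite_if_finite_support pmf_entropy_le_ln_card)
  then have "H_eps \<mu> ((diameter (UNIV :: 'a set) + 1) * \<epsilon>) \<le> pmf_entropy p"
    unfolding H_eps_def using close by (intro INF_lower) simp
  also have "\<dots> \<le> ln (real k)" using entropy by simp
  finally show "H_eps \<mu> ((diameter (UNIV :: 'a set) + 1) * \<epsilon>) \<le> ereal (ln (real k))" .
qed

end
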